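(* Let $\mathbb{D}\in\mathbb{R}^{M\times M}$ satisfy $\mathbb{D}+\mathbb{D}^T=0$, let $r\ge1$ be an integer, $\gamma\in(0,1)$, $\mathbf{Y}^0\in\mathbb{R}^M$, and let $\widetilde{\mathbf{Y}}_r$ be the output of the explicit time discretization described in the context with $\mathbf{R}=0$. Then \[ \max_{0\le t\le T}\|\widetilde{\mathbf{Y}}_r(t)\|_{\ell_2}\leq\|\mathbf{Y}^0\|_{\ell_2} \] under the CFL condition $\lambda:=\tau\|\mathbb{D}\|_{\ell_2}\le\lambda(r,\gamma)$, where $\lambda(r,\gamma)=\sqrt6$ if $r\equiv0\pmod 4$; $\lambda(1,\gamma)=\sqrt{\frac{1-\gamma^2}{2}}$ and $\lambda(r,\gamma)=\sqrt{\frac{2(1-\gamma)}{3-\gamma}}$ if $r\equiv1\pmod4$, $r\ge5$; $\lambda(2,\gamma)=\sqrt{\frac{2(4-\gamma^2)}{3}}$ and $\lambda(r,\gamma)=\sqrt{\frac{6(2-\gamma)}{4-\gamma}}$ if $r\equiv 2\pmod 4$, $r\ge6$; $\lambda(r,\gamma)=\sqrt2$ if $r\equiv3\pmod4$.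
   Context: The ODE system is $\mathbf{Y}'=\mathbb{D}\mathbf{Y}+\mathbf{R}$ on $(0,T)$, $\mathbf{Y}(0)=\mathbf{Y}^0$. Let $0=t_0<t_1<\cdots<t_N=T$, $\tau_n=t_{n+1}-t_n$, $\tau=\max_n\tau_n$; $P^m$ denotes real polynomials of degree $\le m$; $\|\cdot\|_{\ell_2}$ is the Euclidean norm and the induced matrix norm. $I_{r-1}\mathbf{R}$ denotes, on each $(t_n,t_{n+1})$, the $L^2(t_n,t_{n+1})$-orthogonal projection of $\mathbf{R}$ onto $[P^{r-1}]^M$. For $1\le m\le r$ set $\gamma_m^r=0$ if $r\equiv0,3\pmod4$ and $\gamma_m^r=\frac{(m+1)(m-1+\gamma)}{m(m+\gamma)}$ if $r\equiv1,2\pmod4$. Scheme: $\widetilde{\mathbf{Y}}_r$ is a continuous function on $[0,T]$, polynomial of degree $\le\max(2r-1,r+1)$ on each $[t_n,t_{n+1}]$, with $\widetilde{\mathbf{Y}}_r(0)=\mathbf{Y}^0$, computed interval by interval as follows, with $\mathbf{Y}^n=\widetilde{\mathbf{Y}}_r(t_n)$ on $[t_n,t_{n+1}]$: (1) $\mathbf{Y}_0\equiv\mathbf{Y}^n$ and $\widetilde{\mathbf{Y}}_0\in[P^1]^M$ with $\widetilde{\mathbf{Y}}_0'=\frac1\gamma\mathbb{D}\mathbf{Y}^n$, $\widetilde{\mathbf{Y}}_0(t_n)=\mathbf{Y}^n$; (2) for $1\le m\le r$, $\mathbf{Y}_m\in[P^{m+r-1}]^M$ with $\mathbf{Y}_m'=\mathbb{D}\mathbf{Y}_{m-1}+I_{r-1}\mathbf{R}$,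 $\mathbf{Y}_m(t_n)=\mathbf{Y}^n$; (3) for $1\le m\le r$, $\widetilde{\mathbf{Y}}_m\in[P^{\max(m+r-1,m+1)}]^M$ with $\widetilde{\mathbf{Y}}_m'=\mathbb{D}[\gamma_m^r\widetilde{\mathbf{Y}}_{m-1}+(1-\gamma_m^r)\mathbf{Y}_{m-1}]+I_{r-1}\mathbf{R}$, $\widetilde{\mathbf{Y}}_m(t_n)=\mathbf{Y}^n$; and $\widetilde{\mathbf{Y}}_r|_{[t_n,t_{n+1}]}:=\widetilde{\mathbf{Y}}_r$ from step (3) with $m=r$. *)

theory Defs
  imports "HOL-Analysis.Analysis"
begin

definition gam_coef :: "nat \<Rightarrow> real \<Rightarrow> nat \<Rightarrow> real" where
  "gam_coef r \<gamma> m =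
     (if r mod 4 = 0 \<or> r mod 4 = 3 then 0
      else (real m + 1) * (real m - 1 + \<gamma>) / (real m * (real m + \<gamma>)))"

definition cfl_bound :: "nat \<Rightarrow> real \<Rightarrow> real" where
  "cfl_bound r \<gamma> =
     (if r mod 4 = 0 then sqrt 6
      else if r mod 4 = 1 then
        (if r = 1 then sqrt ((1 - \<gamma>\<^sup>2) / 2) else sqrt (2 * (1 - \<gamma>) / (3 - \<gamma>)))
      else if r mod 4 = 2 then
        (if r = 2 then sqrt (2 * (4 - \<gamma>\<^sup>2) / 3) else sqrt (6 * (2 - \<gamma>) / (4 - \<gamma>)))
      else sqrt 2)"

end

theory Submission
  imports Defs
begin

(* For R = 0 the stages on a step [t_n, t_n + x] with initial value y are, by uniqueness
   of antiderivatives, polynomials in x: Y_m is the Taylor polynomial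
   T_m(x) = sum_(k<=m) x^k/k! D^k y of exp(x D) y, and the blended stage Ytilde_m is
   T_m(x) + c_m x^(m+1)/(m+1)! D^(m+1) y with c_m = gamma_1^r ... gamma_m^r / gamma.  The choice of
   gamma_m^r makes c_r = 0 for r = 0, 3 (mod 4) and c_r = (r+1)/(r+gamma) otherwise.
   Skew-symmetry gives <D^j y, D^k y> = 0 for j + k odd and (-1)^((k-j)/2) |D^((j+k)/2) y|^2 otherwise,
   so |Ytilde_r(x)|^2 - |y|^2 = sum_(r/2 < m <= r+1) e_m x^(2m) |D^m y|^2 with explicit coefficients e_m
   that alternate in sign, the first one being nonpositive.  Since
   x^(2m+2) |D^(m+1) y|^2 <= (x |D|)^2 x^(2m) |D^m y|^2, grouping the terms in consecutive pairs shows
   that the sum is nonpositive as long as (x |D|)^2 stays below the ratios |e_m / e_(m+1)| of the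
   pairs, which the CFL condition guarantees.  The bound then propagates from step to step. *)

lemma sum_atMost_reindex_odd:
  fixes f :: "nat \<Rightarrow> 'a::comm_monoid_add"
  assumes "\<And>k. k \<le> r \<Longrightarrow> even (r - k) \<Longrightarrow> f k = 0"
  shows "(\<Sum>k\<le>r. f k) = (\<Sum>m = r div 2 + 1..r. f (2 * m - r - 1))"
proof -
  have "bij_betw (\<lambda>m. 2 * m - r - 1) {r div 2 + 1..r} {k. k \<le> r \<and> odd (r - k)}"
    by (rule bij_betwI[where g = "\<lambda>k. (k + r + 1) div 2"]) (simp_all add: Pi_def, presburger+)
  then have "(\<Sum>m = r div 2 + 1..r. f (2 * m - r - 1)) = (\<Sum>k | k \<le> r \<and> odd (r - k). f k)"
    by (rule sum.reindex_bij_betw)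
  also have "\<dots> = (\<Sum>k\<le>r. f k)"
    by (rule sum.mono_neutral_left) (use assms in auto)
  finally show ?thesis ..
qed

lemma pair_nonpos:
  fixes e0 e1 a0 a1 L :: real
  assumes "e0 \<le> 0" "e1 * L \<le> - e0" "0 \<le> a0" "0 \<le> a1" "a1 \<le> L * a0"
  shows "e0 * a0 + e1 * a1 \<le> 0"
proof (cases "0 \<le> e1")
  case True
  then have "e1 * a1 \<le> e1 * L * a0"
    using assms(5) by (simp add: mult_left_mono mult.assoc)
  also have "\<dots> \<le> - e0 * a0"
    using assms(2,3) by (rule mult_right_mono)
  finally show ?thesis by simp
next
  case False
  then show ?thesis
    using assms(1,3,4) by (simp add: add_nonpos_nonpos mult_nonpos_nonneg)
qed

lemma sum_paired_nonpos:
  fixes e A :: "nat \<Rightarrow> real"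
  assumes A: "\<And>m. 0 \<le> A m" "\<And>m. A (Suc m) \<le> L * A m"
    and head: "\<And>i. p + 2 * i \<le> q \<Longrightarrow> e (p + 2 * i) \<le> 0"
    and pair: "\<And>i. p + 2 * i < q \<Longrightarrow> e (Suc (p + 2 * i)) * L \<le> - e (p + 2 * i)"
  shows "(\<Sum>m = p..q. e m * A m) \<le> 0"
  using head pair
proof (induction "q - p" arbitrary: p rule: less_induct)
  case less
  consider "q < p" | "q = p" | "p < q"
    by linarith
  then show ?case
  proof cases
    case 1
    then show ?thesis by simp
  next
    case 2
    then show ?thesis
      using less.prems(1)[of 0] A(1)[of p] by (simp add: mult_nonpos_nonneg)
  next
    case 3
    have e0: "e p \<le> 0" and e1: "e (Suc p) * L \<le> - e p"
      using less.prems[of 0] 3 by auto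
    have "e p * A p + e (Suc p) * A (Suc p) \<le> 0"
      by (rule pair_nonpos[OF e0 e1 A(1,1) A(2)])
    moreover have "(\<Sum>m = p + 2..q. e m * A m) \<le> 0"
    proof (rule less.hyps)
      show "q - (p + 2) < q - p"
        using 3 by simp
      show "e (p + 2 + 2 * i) \<le> 0" if "p + 2 + 2 * i \<le> q" for i
        using less.prems(1)[of "Suc i"] that by (simp add: algebra_simps)
      show "e (Suc (p + 2 + 2 * i)) * L \<le> - e (p + 2 + 2 * i)" if "p + 2 + 2 * i < q" for i
        using less.prems(2)[of "Suc i"] that by (simp add: algebra_simps)
    qed
    moreover have "{p..q} = {p, Suc p} \<union> {p + 2..q}"
      using 3 by auto
    ultimately show ?thesis
      using 3 by (simp add: sum.union_disjoint)
  qed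
qed

lemma fact_ratio_le:
  fixes L a a' G :: real
  assumes "L * a' \<le> (real q + 1) * (real q + 2) * a" "0 \<le> a" "0 < G" "0 < m"
  shows "a' / (G * fact (q + 2) * real (m + 1)) * L \<le> a / (G * fact q * real m)"
proof -
  have fq: "fact (q + 2) = (real q + 1) * (real q + 2) * (fact q :: real)"
    by (simp add: algebra_simps)
  have pos: "0 < G * fact q * real (m + 1)" "0 < (real q + 1) * (real q + 2)"
    using assms by auto
  have "a' / (G * fact (q + 2) * real (m + 1)) * L = (L * a') / ((real q + 1) * (real q + 2)) / (G * fact q * real (m + 1))"
    unfolding fq by (simp add: field_simps)
  also have "\<dots> \<le> a / (G * fact q * real (m + 1))"
    using assms(1) pos by (intro divide_right_mono) (simp_all add: pos_divide_le_eq mult.commute)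
  also have "\<dots> \<le> a / (G * fact q * real m)"
    using assms by (intro divide_left_mono mult_left_mono) auto
  finally show ?thesis .
qed

lemma weighted_ratio_bound_mono:
  fixes L \<gamma> q q0 :: real
  assumes "0 \<le> q0" "q0 \<le> q" "\<gamma> < 1"
    and L: "L * (q0 + 3 - \<gamma>) \<le> (q0 + 1) * (q0 + 2) * (q0 + 1 - \<gamma>)"
  shows "L * (q + 3 - \<gamma>) \<le> (q + 1) * (q + 2) * (q + 1 - \<gamma>)"
proof -
  have h1: "(q0 + 1) * (q0 + 2) \<le> (q + 1) * (q + 2)"
    using assms by (simp add: mult_mono)
  have h2: "(q0 + 1 - \<gamma>) * (q + 3 - \<gamma>) \<le> (q + 1 - \<gamma>) * (q0 + 3 - \<gamma>)"
    using assms(2) by (simp add: algebra_simps)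
  have "L * (q + 3 - \<gamma>) * (q0 + 3 - \<gamma>) = (L * (q0 + 3 - \<gamma>)) * (q + 3 - \<gamma>)"
    by (simp add: mult_ac)
  also have "\<dots> \<le> ((q0 + 1) * (q0 + 2)) * ((q0 + 1 - \<gamma>) * (q + 3 - \<gamma>))"
    using mult_right_mono[OF L, of "q + 3 - \<gamma>"] assms by (simp add: mult_ac)
  also have "\<dots> \<le> ((q + 1) * (q + 2)) * ((q + 1 - \<gamma>) * (q0 + 3 - \<gamma>))"
    using assms by (intro mult_mono[OF h1 h2]) auto
  finally show ?thesis
    using assms by (simp add: mult_ac)
qed

lemma bounded_by_start_on_partition:
  fixes f :: "real \<Rightarrow> real" and t :: "nat \<Rightarrow> real"
  assumes mono: "\<forall>n<N. t n \<le> t (Suc n)"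
    and step: "\<And>n s. n < N \<Longrightarrow> s \<in> {t n..t (Suc n)} \<Longrightarrow> f s \<le> f (t n)"
  shows "\<forall>s\<in>{t 0..t N}. f s \<le> f (t 0)"
  using assms
proof (induction N)
  case 0
  then show ?case by simp
next
  case (Suc N)
  have IH: "\<forall>s\<in>{t 0..t N}. f s \<le> f (t 0)"
    using Suc by simp
  show ?case
  proof
    fix s assume s: "s \<in> {t 0..t (Suc N)}"
    show "f s \<le> f (t 0)"
    proof (cases "s \<le> t N")
      case True
      then show ?thesis
        using IH s by simp
    next
      case False
      have "t 0 \<le> t N"
        using Suc.prems(1) by (induction N) (auto intro: order_trans)
      then have "f (t N) \<le> f (t 0)"
        using IH by simp
      moreover have "f s \<le> f (t N)"
        using Suc.prems(2)[of N s] s False by simp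
      ultimately show ?thesis
        by linarith
    qed
  qed
qed

lemma same_vector_derivative_imp_eq:
  fixes f g :: "real \<Rightarrow> 'a::real_normed_vector"
  assumes "convex S" "a \<in> S" "f a = g a"
    and "\<And>s. s \<in> S \<Longrightarrow> (f has_vector_derivative h s) (at s within S)"
    and "\<And>s. s \<in> S \<Longrightarrow> (g has_vector_derivative h s) (at s within S)"
    and "x \<in> S"
  shows "f x = g x"
proof -
  have "((\<lambda>s. f s - g s) has_vector_derivative 0) (at s within S)" if "s \<in> S" for s
    using has_vector_derivative_diff[OF assms(4,5)[OF that]] by simp
  then obtain c where "\<And>s. s \<in> S \<Longrightarrow> f s - g s = c"
    using has_vector_derivative_zero_constant[OF assms(1)] by blast
  then have "f x - g x = f a - g a"
    using assms(2,6) by simp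
  then show ?thesis
    using assms(3) by simp
qed

lemma has_vector_derivative_shifted_monomial:
  "((\<lambda>s. ((s - a) ^ Suc k / fact (Suc k)) *\<^sub>R v) has_vector_derivative ((s - a) ^ k / fact k) *\<^sub>R v)
     (at s within S)"
proof -
  have "real k * (s - a) ^ (k - 1) * (s - a) = real k * (s - a) ^ k"
    by (cases k) auto
  then have "((s - a) ^ k + real k * (s - a) ^ (k - 1) * (s - a)) / (real (Suc k) * fact k)
      = (s - a) ^ k / fact k"
    by (simp add: field_simps del: of_nat_Suc) (simp add: algebra_simps)
  then show ?thesis
    by (auto intro!: derivative_eq_intros simp del: of_nat_Suc)
qed

lemma has_real_derivative_power_div:
  "((\<lambda>x. x ^ (n + 1) / real (n + 1)) has_real_derivative x ^ n) (at x within S)"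
  using DERIV_cdivide[OF DERIV_pow[of "Suc n" x S], of "real (Suc n)"] by (simp del: of_nat_Suc)

section \<open>Taylor polynomials of the exponential\<close>

definition taylor_exp :: "('a::real_vector \<Rightarrow> 'a) \<Rightarrow> 'a \<Rightarrow> nat \<Rightarrow> real \<Rightarrow> 'a" where
  "taylor_exp D y m x = (\<Sum>k\<le>m. (x ^ k / fact k) *\<^sub>R (D ^^ k) y)"

definition taylor_exp_ext :: "('a::real_vector \<Rightarrow> 'a) \<Rightarrow> 'a \<Rightarrow> nat \<Rightarrow> real \<Rightarrow> real \<Rightarrow> 'a" where
  "taylor_exp_ext D y m c x = taylor_exp D y m x + (c * x ^ Suc m / fact (Suc m)) *\<^sub>R (D ^^ Suc m) y"

lemma taylor_exp_0 [simp]: "taylor_exp D y 0 x = y"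
  by (simp add: taylor_exp_def)

lemma taylor_exp_at_0 [simp]: "taylor_exp D y m 0 = y"
  by (induction m) (simp_all add: taylor_exp_def)

lemma taylor_exp_Suc:
  "taylor_exp D y (Suc m) x = taylor_exp D y m x + (x ^ Suc m / fact (Suc m)) *\<^sub>R (D ^^ Suc m) y"
  by (simp add: taylor_exp_def)

lemma taylor_exp_ext_at_0 [simp]: "taylor_exp_ext D y m c 0 = y"
  by (simp add: taylor_exp_ext_def)

(* The coefficient of x^(2m) |D^m y|^2 in |taylor_exp_ext D y r c x|^2 - |y|^2, see norm_taylor_exp_ext. *)
definition energy_coef :: "nat \<Rightarrow> real \<Rightarrow> nat \<Rightarrow> real" where
  "energy_coef r c m =
     (if m \<le> r then (-1) ^ (r + 1 - m) *
        (2 * c / (fact (r + 1) * fact (2 * m - r - 1)) - 1 / (fact r * fact (2 * m - r - 1) * real m))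
      else (c / fact (r + 1))\<^sup>2)"

lemma energy_coef_unweighted:
  assumes "m \<le> r"
  shows "energy_coef r 0 m = - ((-1) ^ (r + 1 - m) / (fact r * fact (2 * m - r - 1) * real m))"
  using assms by (simp add: energy_coef_def)

lemma energy_coef_unweighted_last [simp]: "energy_coef r 0 (Suc r) = 0"
  by (simp add: energy_coef_def)

lemma energy_coef_weighted:
  assumes "m \<le> r" "0 < m" "0 < \<gamma>"
  shows "energy_coef r ((real r + 1) / (real r + \<gamma>)) m = (-1) ^ (r + 1 - m) *
    ((2 * real m - real r - \<gamma>) / (fact r * (real r + \<gamma>) * fact (2 * m - r - 1) * real m))"
proof -
  have alg: "2 * ((R + 1) / (R + \<gamma>)) / ((R + 1) * F * Q) - 1 / (F * Q * M)
      = (2 * M - R - \<gamma>) / (F * (R + \<gamma>) * Q * M)"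
    if "R + 1 \<noteq> 0" "R + \<gamma> \<noteq> 0" "F \<noteq> 0" "Q \<noteq> 0" "M \<noteq> 0" for R F Q M :: real
    using that by (simp add: divide_simps) (simp add: algebra_simps)
  have "fact (r + 1) = (real r + 1) * (fact r :: real)"
    by simp
  then show ?thesis
    using alg[of "real r" "fact r" "fact (2 * m - r - 1)" "real m"] assms
    by (simp only: energy_coef_def if_True) simp
qed

lemma energy_coef_weighted_last:
  assumes "0 < \<gamma>"
  shows "energy_coef r ((real r + 1) / (real r + \<gamma>)) (r + 1) = 1 / ((real r + \<gamma>) * fact r)\<^sup>2"
proof -
  have alg: "(R + 1) / (R + \<gamma>) / ((R + 1) * F) = 1 / ((R + \<gamma>) * F)"
    if "R + 1 \<noteq> 0" "R + \<gamma> \<noteq> 0" "F \<noteq> 0" for R F :: real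
    using that by (simp add: divide_simps)
  have "fact (r + 1) = (real r + 1) * (fact r :: real)"
    by simp
  then show ?thesis
    using alg[of "real r" "fact r"] assms by (simp only: energy_coef_def) (simp add: power_one_over)
qed

section \<open>Skew-symmetric operators\<close>

locale skew_operator = bounded_linear D for D :: "'a::real_inner \<Rightarrow> 'a" +
  assumes skew: "D u \<bullet> v = - (u \<bullet> D v)"
begin

lemma inner_skew_self [simp]: "u \<bullet> D u = 0"
  using skew[of u u] by (simp add: inner_commute)

lemma inner_funpow:
  "(D ^^ j) y \<bullet> (D ^^ (j + i)) y =
     (if odd i then 0 else (-1) ^ (i div 2) * (norm ((D ^^ (j + i div 2)) y))\<^sup>2)"
proof (induction i arbitrary: j rule: nat_induct2)
  case 0
  then show ?case by (simp add: power2_norm_eq_inner)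
next
  case 1
  then show ?case by simp
next
  case (step i)
  have "(D ^^ j) y \<bullet> (D ^^ (j + (i + 2))) y = - ((D ^^ Suc j) y \<bullet> (D ^^ (Suc j + i)) y)"
    using skew[of "(D ^^ j) y" "(D ^^ (Suc j + i)) y"] by simp
  then show ?case
    using step.IH[of "Suc j"] by simp
qed

lemma inner_funpow_Suc:
  assumes "k \<le> r"
  shows "(D ^^ k) y \<bullet> (D ^^ Suc r) y =
    (if even (r - k) then 0 else (-1) ^ ((r + 1 - k) div 2) * (norm ((D ^^ ((r + 1 + k) div 2)) y))\<^sup>2)"
proof -
  have "k + (r + 1 - k) = Suc r" "k + (r + 1 - k) div 2 = (r + 1 + k) div 2"
    "odd (r + 1 - k) \<longleftrightarrow> even (r - k)"
    using assms by presburger+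
  then show ?thesis
    using inner_funpow[where j = k and i = "r + 1 - k" and y = y] by (simp only:)
qed

lemma has_vector_derivative_taylor_exp:
  "((\<lambda>s. taylor_exp D y m (s - a)) has_vector_derivative
     D (taylor_exp D y m (s - a)) - ((s - a) ^ m / fact m) *\<^sub>R (D ^^ Suc m) y) (at s within S)"
proof (induction m)
  case 0
  then show ?case by (simp add: has_vector_derivative_const)
next
  case (Suc m)
  have "((\<lambda>s. taylor_exp D y m (s - a) + ((s - a) ^ Suc m / fact (Suc m)) *\<^sub>R (D ^^ Suc m) y)
      has_vector_derivative
        (D (taylor_exp D y m (s - a)) - ((s - a) ^ m / fact m) *\<^sub>R (D ^^ Suc m) y)
        + ((s - a) ^ m / fact m) *\<^sub>R (D ^^ Suc m) y) (at s within S)"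
    by (intro has_vector_derivative_add Suc.IH has_vector_derivative_shifted_monomial)
  then show ?case
    by (simp add: taylor_exp_Suc add scaleR)
qed

lemma has_vector_derivative_taylor_exp_Suc:
  "((\<lambda>s. taylor_exp D y (Suc m) (s - a)) has_vector_derivative D (taylor_exp D y m (s - a)))
     (at s within S)"
  using has_vector_derivative_taylor_exp[of y "Suc m" a s S]
  by (simp add: taylor_exp_Suc add scaleR)

lemma has_vector_derivative_taylor_exp_ext_0:
  "((\<lambda>s. taylor_exp_ext D y 0 c (s - a)) has_vector_derivative c *\<^sub>R D y) (at s within S)"
  using has_vector_derivative_add[OF has_vector_derivative_const[of y]
      has_vector_derivative_shifted_monomial[of a 0 "c *\<^sub>R D y"]]
  by (simp add: taylor_exp_ext_def mult.commute)

lemma has_vector_derivative_taylor_exp_ext_Suc: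
  "((\<lambda>s. taylor_exp_ext D y (Suc m) c (s - a)) has_vector_derivative D (taylor_exp_ext D y m c (s - a)))
     (at s within S)"
  using has_vector_derivative_add[OF has_vector_derivative_taylor_exp_Suc
      has_vector_derivative_shifted_monomial[of a "Suc m" "c *\<^sub>R (D ^^ Suc (Suc m)) y"]]
  by (simp add: taylor_exp_ext_def add scaleR mult.commute mult.left_commute)

(* Both sides have the derivative -2 x^r/r! <T_r x, D^(r+1) y>, because
   T_r' = D T_r - x^r/r! D^(r+1) y and <u, D u> = 0. *)
lemma norm_taylor_exp:
  "(norm (taylor_exp D y r x))\<^sup>2 = (norm y)\<^sup>2 - 2 * (\<Sum>k\<le>r.
     ((D ^^ k) y \<bullet> (D ^^ Suc r) y) / (fact r * fact k) * (x ^ (k + r + 1) / real (k + r + 1)))"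
proof -
  let ?g = "\<lambda>k. ((D ^^ k) y \<bullet> (D ^^ Suc r) y) / (fact r * fact k)"
  define F where "F x = (norm (taylor_exp D y r x))\<^sup>2" for x
  define G where "G x = (norm y)\<^sup>2 - 2 * (\<Sum>k\<le>r. ?g k * (x ^ (k + r + 1) / real (k + r + 1)))" for x
  define h where "h x = - 2 * (\<Sum>k\<le>r. ?g k * x ^ (k + r))" for x
  have "(F has_vector_derivative h s) (at s within UNIV)" for s
  proof -
    let ?T = "taylor_exp D y r s" and ?T' = "D (taylor_exp D y r s) - (s ^ r / fact r) *\<^sub>R (D ^^ Suc r) y"
    have T: "((\<lambda>s. taylor_exp D y r s) has_vector_derivative ?T') (at s)"
      using has_vector_derivative_taylor_exp[of y r 0 s UNIV] by simp
    have "(F has_vector_derivative ?T \<bullet> ?T' + ?T' \<bullet> ?T) (at s)"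
      unfolding F_def power2_norm_eq_inner
      by (rule bounded_bilinear.has_vector_derivative[OF bounded_bilinear_inner T T])
    moreover have "?T \<bullet> ?T' + ?T' \<bullet> ?T = - 2 * (s ^ r / fact r) * (?T \<bullet> (D ^^ Suc r) y)"
      by (simp add: inner_commute inner_diff_right)
    moreover have "- 2 * (s ^ r / fact r) * (?T \<bullet> (D ^^ Suc r) y) = h s"
      by (simp add: h_def taylor_exp_def inner_sum_left sum_distrib_left power_add field_simps)
    ultimately show ?thesis by simp
  qed
  moreover have "(G has_vector_derivative h s) (at s within UNIV)" for s
  proof -
    have "(G has_real_derivative 0 - 2 * (\<Sum>k\<le>r. ?g k * s ^ (k + r))) (at s)"
      unfolding G_def by (intro derivative_intros DERIV_sum DERIV_cmult has_real_derivative_power_div)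
    then show ?thesis
      by (simp add: has_real_derivative_iff_has_vector_derivative h_def)
  qed
  moreover have "F 0 = G 0"
    by (simp add: F_def G_def)
  ultimately have "F x = G x"
    by (intro same_vector_derivative_imp_eq[of UNIV 0 F G h x]) auto
  then show ?thesis by (simp add: F_def G_def)
qed

lemma sum_inner_funpow_Suc_reindex:
  "(\<Sum>k\<le>r. ((D ^^ k) y \<bullet> (D ^^ Suc r) y) * x ^ (k + r + 1)
      * (2 * c / (fact (Suc r) * fact k) - 2 / (fact r * fact k * real (k + r + 1))))
    = (\<Sum>m = r div 2 + 1..r. energy_coef r c m * (x ^ (2 * m) * (norm ((D ^^ m) y))\<^sup>2))"
  (is "sum ?f _ = _")
proof -
  have "sum ?f {..r} = (\<Sum>m = r div 2 + 1..r. ?f (2 * m - r - 1))"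
    by (rule sum_atMost_reindex_odd) (simp add: inner_funpow_Suc del: funpow.simps)
  also have "\<dots> = (\<Sum>m = r div 2 + 1..r. energy_coef r c m * (x ^ (2 * m) * (norm ((D ^^ m) y))\<^sup>2))"
  proof (rule sum.cong[OF refl])
    fix m assume m: "m \<in> {r div 2 + 1..r}"
    define q where "q = 2 * m - r - 1"
    have q: "q \<le> r" "q + r + 1 = 2 * m" "\<not> even (r - q)" "(r + 1 - q) div 2 = r + 1 - m"
      "(r + 1 + q) div 2 = m"
      using m unfolding q_def by auto
    have g: "(D ^^ q) y \<bullet> (D ^^ Suc r) y = (-1) ^ (r + 1 - m) * (norm ((D ^^ m) y))\<^sup>2"
      using inner_funpow_Suc[OF q(1), of y] by (simp only: q(3-5) if_False)
    have e: "energy_coef r c m =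
        (-1) ^ (r + 1 - m) * (2 * c / (fact (Suc r) * fact q) - 1 / (fact r * fact q * real m))"
      using m by (simp add: energy_coef_def q_def)
    have "?f q = (-1) ^ (r + 1 - m) * (norm ((D ^^ m) y))\<^sup>2 * x ^ (2 * m)
        * (2 * c / (fact (Suc r) * fact q) - 2 / (fact r * fact q * real (2 * m)))"
      by (simp only: g q(2))
    also have "2 / (fact r * fact q * real (2 * m)) = 1 / (fact r * fact q * real m)"
      by simp
    finally show "?f q = energy_coef r c m * (x ^ (2 * m) * (norm ((D ^^ m) y))\<^sup>2)"
      unfolding e by (simp only: mult_ac)
  qed
  finally show ?thesis .
qed

lemma norm_taylor_exp_ext:
  "(norm (taylor_exp_ext D y r c x))\<^sup>2 = (norm y)\<^sup>2
     + (\<Sum>m = r div 2 + 1..r + 1. energy_coef r c m * (x ^ (2 * m) * (norm ((D ^^ m) y))\<^sup>2))"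
proof -
  let ?p = "(D ^^ Suc r) y" and ?T = "taylor_exp D y r x" and ?g = "\<lambda>k. (D ^^ k) y \<bullet> (D ^^ Suc r) y"
  define \<beta> where "\<beta> = c * x ^ Suc r / fact (Suc r)"
  have Tp: "?T \<bullet> ?p = (\<Sum>k\<le>r. x ^ k / fact k * ?g k)"
    unfolding taylor_exp_def by (simp add: inner_sum_left)
  have "taylor_exp_ext D y r c x = ?T + \<beta> *\<^sub>R ?p"
    unfolding taylor_exp_ext_def \<beta>_def ..
  then have "(norm (taylor_exp_ext D y r c x))\<^sup>2 = (norm ?T)\<^sup>2 + 2 * \<beta> * (?T \<bullet> ?p) + \<beta>\<^sup>2 * (norm ?p)\<^sup>2"
    unfolding power2_norm_eq_inner
    by (simp add: inner_add_left inner_add_right inner_commute power2_eq_square)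
  also have "(norm ?T)\<^sup>2 + 2 * \<beta> * (?T \<bullet> ?p) = (norm y)\<^sup>2
      + (\<Sum>k\<le>r. 2 * \<beta> * (x ^ k / fact k * ?g k)
          - 2 * (?g k / (fact r * fact k) * (x ^ (k + r + 1) / real (k + r + 1))))"
    unfolding norm_taylor_exp Tp by (simp add: sum_subtractf sum_distrib_left)
  also have "(\<Sum>k\<le>r. 2 * \<beta> * (x ^ k / fact k * ?g k)
      - 2 * (?g k / (fact r * fact k) * (x ^ (k + r + 1) / real (k + r + 1))))
    = (\<Sum>k\<le>r. ?g k * x ^ (k + r + 1)
      * (2 * c / (fact (Suc r) * fact k) - 2 / (fact r * fact k * real (k + r + 1))))"
    by (rule sum.cong) (simp_all add: \<beta>_def power_add algebra_simps del: fact_Suc)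
  also have "\<dots> = (\<Sum>m = r div 2 + 1..r. energy_coef r c m * (x ^ (2 * m) * (norm ((D ^^ m) y))\<^sup>2))"
    by (rule sum_inner_funpow_Suc_reindex)
  also have "\<beta>\<^sup>2 * (norm ?p)\<^sup>2 = energy_coef r c (r + 1) * (x ^ (2 * (r + 1)) * (norm ?p)\<^sup>2)"
    unfolding energy_coef_def \<beta>_def power_even_eq by (simp add: power_mult_distrib power_divide)
  moreover have "{r div 2 + 1..r + 1} = insert (r + 1) {r div 2 + 1..r}"
    by auto
  ultimately show ?thesis
    by simp
qed

end

lemma skew_operator_matrix:
  fixes D :: "real ^ 'n ^ 'n"
  assumes "D + transpose D = 0"
  shows "skew_operator ((*v) D)"
proof -
  have "transpose D = - D"
    using assms by (simp add: eq_neg_iff_add_eq_0 add.commute)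
  have "(D *v u) \<bullet> v = - (u \<bullet> (D *v v))" for u v :: "real ^ 'n"
  proof -
    have "u \<bullet> (D *v v) = (u v* D) \<bullet> v"
      by (simp add: dot_lmul_matrix)
    also have "u v* D = transpose D *v u"
      by simp
    also have "\<dots> = - (D *v u)"
      unfolding \<open>transpose D = - D\<close> by (simp add: matrix_vector_mult_def vec_eq_iff sum_negf)
    finally show ?thesis
      by simp
  qed
  then show ?thesis
    by (intro skew_operator.intro skew_operator_axioms.intro matrix_vector_mul_bounded_linear)
qed

section \<open>Signs and ratios of the energy coefficients\<close>

lemma even_sub_half_iff: "even (r - r div 2) \<longleftrightarrow> r mod 4 = 0 \<or> r mod 4 = (3::nat)"
  by presburger

(* The pairs of the energy sum start at m = r div 2 + 1 + 2i.  The sign (-1)^(r+1-m) of their leading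
   coefficient is the same for all pairs; this is why gamma_m^r depends on r mod 4. *)
lemma pair_index:
  fixes r i :: nat
  defines "m \<equiv> r div 2 + 1 + 2 * i"
  shows "r + 1 \<le> 2 * m"
    and "m \<le> r + 1 \<Longrightarrow> even (r + 1 - m) \<longleftrightarrow> r mod 4 = 0 \<or> r mod 4 = 3"
    and "even r \<Longrightarrow> 1 \<le> 2 * m - r - 1"
proof -
  show "r + 1 \<le> 2 * m" "even r \<Longrightarrow> 1 \<le> 2 * m - r - 1"
    unfolding m_def by presburger+
  define a where "a = r - r div 2"
  assume "m \<le> r + 1"
  then have "r + 1 - m = a - 2 * i" "2 * i \<le> a"
    unfolding m_def a_def by auto
  then have "even (r + 1 - m) \<longleftrightarrow> even a"
    by presburger
  then show "even (r + 1 - m) \<longleftrightarrow> r mod 4 = 0 \<or> r mod 4 = 3"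
    unfolding a_def even_sub_half_iff .
qed

(* lambda(r, gamma)^2 is the ratio bound of the first pair, where q = 2m - r - 1 is 1 for even r and
   0 for odd r; the bound grows with q. *)
lemma cfl_bound_unweighted:
  assumes "r mod 4 = 0 \<or> r mod 4 = 3" "L \<le> (cfl_bound r \<gamma>)\<^sup>2" "even r \<Longrightarrow> 1 \<le> q"
  shows "L \<le> (real q + 1) * (real q + 2)"
proof (cases "r mod 4 = 0")
  case True
  then have "1 \<le> q"
    using assms(3) by presburger
  then have "6 \<le> (real q + 1) * (real q + 2)"
    using mult_mono[of 2 "real q + 1" 3 "real q + 2"] by simp
  then show ?thesis
    using assms(2) True by (simp add: cfl_bound_def)
next
  case False
  then have "2 \<le> (real q + 1) * (real q + 2)"
    using mult_mono[of 1 "real q + 1" 2 "real q + 2"] by simp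
  then show ?thesis
    using assms(1,2) False by (simp add: cfl_bound_def)
qed

lemma cfl_bound_weighted:
  assumes "r mod 4 = 1 \<or> r mod 4 = 2" "3 \<le> r" "0 < \<gamma>" "\<gamma> < 1" "L \<le> (cfl_bound r \<gamma>)\<^sup>2"
    and "even r \<Longrightarrow> 1 \<le> q"
  shows "L * (real q + 3 - \<gamma>) \<le> (real q + 1) * (real q + 2) * (real q + 1 - \<gamma>)"
proof (cases "r mod 4 = 1")
  case True
  then have "L \<le> 2 * (1 - \<gamma>) / (3 - \<gamma>)"
    using assms by (simp add: cfl_bound_def)
  then have "L * (0 + 3 - \<gamma>) \<le> (0 + 1) * (0 + 2) * (0 + 1 - \<gamma>)"
    using assms by (simp add: le_divide_eq)
  then show ?thesis
    using weighted_ratio_bound_mono[of 0 "real q" \<gamma> L] assms by simp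
next
  case False
  then have r2: "r mod 4 = 2"
    using assms(1) by presburger
  then have "1 \<le> q"
    using assms(6) by presburger
  have "L \<le> 6 * (2 - \<gamma>) / (4 - \<gamma>)"
    using r2 assms by (simp add: cfl_bound_def)
  then have "L * (1 + 3 - \<gamma>) \<le> (1 + 1) * (1 + 2) * (1 + 1 - \<gamma>)"
    using assms by (simp add: le_divide_eq)
  then show ?thesis
    using weighted_ratio_bound_mono[of 1 "real q" \<gamma> L] assms \<open>1 \<le> q\<close> by simp
qed

lemma cfl_bound_weighted_last:
  assumes "r mod 4 = 1 \<or> r mod 4 = 2" "0 < \<gamma>" "\<gamma> < 1" "L \<le> (cfl_bound r \<gamma>)\<^sup>2"
  shows "L \<le> (real r - \<gamma>) * (real r + \<gamma>)"
proof -
  have sq: "(real r - \<gamma>) * (real r + \<gamma>) = (real r)\<^sup>2 - \<gamma>\<^sup>2"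
    by (simp add: algebra_simps power2_eq_square)
  have "\<gamma>\<^sup>2 < 1"
    using assms by (simp add: power_less_one_iff)
  have "r = 1 \<or> r = 2 \<or> 3 \<le> r"
    using assms(1) by presburger
  then consider "r = 1" | "r = 2" | "3 \<le> r"
    by blast
  then show ?thesis
  proof cases
    case 1
    then show ?thesis
      using assms \<open>\<gamma>\<^sup>2 < 1\<close> unfolding sq by (simp add: cfl_bound_def)
  next
    case 2
    then show ?thesis
      using assms \<open>\<gamma>\<^sup>2 < 1\<close> unfolding sq by (simp add: cfl_bound_def)
  next
    case 3
    have "(cfl_bound r \<gamma>)\<^sup>2 \<le> 6"
      using assms(1-3) 3 by (auto simp: cfl_bound_def divide_le_eq)
    moreover have "9 \<le> (real r)\<^sup>2"
      using power_mono[of 3 "real r" 2] 3 by simp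
    ultimately show ?thesis
      using assms \<open>\<gamma>\<^sup>2 < 1\<close> unfolding sq by linarith
  qed
qed

lemma energy_coef_unweighted_pair:
  assumes "Suc m \<le> r" "r + 1 \<le> 2 * m" "even (r + 1 - m)"
    and "L \<le> (real (2 * m - r - 1) + 1) * (real (2 * m - r - 1) + 2)"
  shows "energy_coef r 0 (Suc m) * L \<le> - energy_coef r 0 m"
proof -
  define q where "q = 2 * m - r - 1"
  have "odd (r + 1 - Suc m)" "2 * Suc m - r - 1 = q + 2" "0 < m"
    using assms(1-3) unfolding q_def by presburger+
  then have "energy_coef r 0 (Suc m) = 1 / (fact r * fact (q + 2) * real (m + 1))"
    "energy_coef r 0 m = - (1 / (fact r * fact q * real m))"
    using assms(1,3) by (simp_all add: energy_coef_unweighted q_def)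
  moreover have "1 / (fact r * fact (q + 2) * real (m + 1)) * L \<le> 1 / (fact r * fact q * real m)"
    using assms(4) \<open>0 < m\<close> by (intro fact_ratio_le) (auto simp: q_def)
  ultimately show ?thesis
    by simp
qed

lemma energy_sum_unweighted_nonpos:
  assumes r: "r mod 4 = 0 \<or> r mod 4 = 3" and L: "L \<le> (cfl_bound r \<gamma>)\<^sup>2"
    and A: "\<And>m. 0 \<le> A m" "\<And>m. A (Suc m) \<le> L * A m"
  shows "(\<Sum>m = r div 2 + 1..r + 1. energy_coef r 0 m * A m) \<le> 0"
proof (rule sum_paired_nonpos[where L = L and A = A, OF A])
  fix i
  define m where "m = r div 2 + 1 + 2 * i"
  have m: "r + 1 \<le> 2 * m" "m \<le> r + 1 \<Longrightarrow> even (r + 1 - m)" "even r \<Longrightarrow> 1 \<le> 2 * m - r - 1"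
    using pair_index[of r i, folded m_def] r by blast+
  then have e: "energy_coef r 0 m \<le> 0" if "m \<le> r + 1"
    using that by (cases "m = r + 1") (auto simp: energy_coef_unweighted)
  then show "energy_coef r 0 m \<le> 0" if "m \<le> r + 1"
    using that by simp
  show "energy_coef r 0 (Suc m) * L \<le> - energy_coef r 0 m" if "m < r + 1"
  proof (cases "Suc m = r + 1")
    case True
    then show ?thesis
      using e that by simp
  next
    case False
    then show ?thesis
      using energy_coef_unweighted_pair[of m r L] that m cfl_bound_unweighted[OF r L m(3)]
      by simp
  qed
qed

lemma energy_coef_weighted_odd:
  assumes "m \<le> r" "r + 1 \<le> 2 * m" "odd (r + 1 - m)" "0 < \<gamma>"
  shows "energy_coef r ((real r + 1) / (real r + \<gamma>)) m = - ((real (2 * m - r - 1) + 1 - \<gamma>)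
    / (fact r * (real r + \<gamma>) * fact (2 * m - r - 1) * real m))"
proof -
  have "2 * real m - real r - \<gamma> = real (2 * m - r - 1) + 1 - \<gamma>"
    using assms(2) by (simp add: of_nat_diff)
  then show ?thesis
    using energy_coef_weighted[of m r \<gamma>] assms by (simp add: minus_divide_left)
qed

lemma energy_coef_weighted_pair:
  assumes "Suc m \<le> r" "r + 1 \<le> 2 * m" "odd (r + 1 - m)" "0 < \<gamma>" "\<gamma> < 1"
    and "L * (real (2 * m - r - 1) + 3 - \<gamma>)
      \<le> (real (2 * m - r - 1) + 1) * (real (2 * m - r - 1) + 2) * (real (2 * m - r - 1) + 1 - \<gamma>)"
  shows "energy_coef r ((real r + 1) / (real r + \<gamma>)) (Suc m) * L
    \<le> - energy_coef r ((real r + 1) / (real r + \<gamma>)) m"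
proof -
  define q where "q = 2 * m - r - 1"
  have "even (r + 1 - Suc m)" "2 * Suc m - r - 1 = q + 2" "0 < m"
    using assms(1-3) unfolding q_def by presburger+
  moreover have "2 * real (Suc m) - real r - \<gamma> = real q + 3 - \<gamma>"
    using assms(2) by (simp add: q_def of_nat_diff)
  ultimately have "energy_coef r ((real r + 1) / (real r + \<gamma>)) (Suc m)
      = (real q + 3 - \<gamma>) / (fact r * (real r + \<gamma>) * fact (q + 2) * real (m + 1))"
    using assms(1,4) by (simp add: energy_coef_weighted)
  moreover have "(real q + 3 - \<gamma>) / (fact r * (real r + \<gamma>) * fact (q + 2) * real (m + 1)) * L
      \<le> (real q + 1 - \<gamma>) / (fact r * (real r + \<gamma>) * fact q * real m)"
    using assms(4-6) \<open>0 < m\<close> by (intro fact_ratio_le) (auto simp: q_def)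
  ultimately show ?thesis
    using energy_coef_weighted_odd[of m r \<gamma>] assms by (simp add: q_def)
qed

lemma energy_coef_weighted_last_pair:
  assumes "1 \<le> r" "0 < \<gamma>" "L \<le> (real r - \<gamma>) * (real r + \<gamma>)"
  shows "energy_coef r ((real r + 1) / (real r + \<gamma>)) (Suc r) * L
    \<le> - energy_coef r ((real r + 1) / (real r + \<gamma>)) r"
proof -
  define F where "F = (fact r :: real)"
  have F: "0 < F" "fact (r - 1) * real r = F"
    using assms(1) fact_reduce[of r, where 'a = real] by (simp_all add: F_def mult.commute)
  have pos: "0 < real r + \<gamma>"
    using assms by simp
  have "energy_coef r ((real r + 1) / (real r + \<gamma>)) (Suc r) * L = L / ((real r + \<gamma>) * F)\<^sup>2"
    using energy_coef_weighted_last[OF assms(2), of r] by (simp add: F_def)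
  also have "\<dots> \<le> (real r - \<gamma>) * (real r + \<gamma>) / ((real r + \<gamma>) * F)\<^sup>2"
    using assms(3) by (simp add: divide_right_mono)
  also have "\<dots> = (real r - \<gamma>) / (F * (real r + \<gamma>) * F)"
    using F pos by (simp add: power2_eq_square)
  also have "\<dots> = - energy_coef r ((real r + 1) / (real r + \<gamma>)) r"
    using energy_coef_weighted[of r r \<gamma>] assms F by (simp add: F_def algebra_simps minus_divide_left)
  finally show ?thesis .
qed

lemma energy_sum_weighted_nonpos:
  assumes r: "r mod 4 = 1 \<or> r mod 4 = 2" and \<gamma>: "0 < \<gamma>" "\<gamma> < 1"
    and L: "L \<le> (cfl_bound r \<gamma>)\<^sup>2"
    and A: "\<And>m. 0 \<le> A m" "\<And>m. A (Suc m) \<le> L * A m"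
  shows "(\<Sum>m = r div 2 + 1..r + 1. energy_coef r ((real r + 1) / (real r + \<gamma>)) m * A m) \<le> 0"
proof (rule sum_paired_nonpos[where L = L and A = A, OF A])
  fix i
  define m where "m = r div 2 + 1 + 2 * i"
  have "\<not> (r mod 4 = 0 \<or> r mod 4 = 3)"
    using r by auto
  then have m: "r + 1 \<le> 2 * m" "m \<le> r + 1 \<Longrightarrow> odd (r + 1 - m)" "even r \<Longrightarrow> 1 \<le> 2 * m - r - 1"
    using pair_index[of r i, folded m_def] by blast+
  have "m \<le> r" if "m \<le> r + 1"
    using that m(2) by (cases "m = r + 1") auto
  moreover have "0 < real (2 * m - r - 1) + 1 - \<gamma>" "0 < fact r * (real r + \<gamma>) * fact (2 * m - r - 1) * real m"
    using m(1) \<gamma> by auto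
  ultimately show "energy_coef r ((real r + 1) / (real r + \<gamma>)) m \<le> 0" if "m \<le> r + 1"
    using that energy_coef_weighted_odd[of m r \<gamma>] m \<gamma> by simp
  show "energy_coef r ((real r + 1) / (real r + \<gamma>)) (Suc m) * L
      \<le> - energy_coef r ((real r + 1) / (real r + \<gamma>)) m" if "m < r + 1"
  proof (cases "m = r")
    case True
    then show ?thesis
      using energy_coef_weighted_last_pair[of r \<gamma> L] cfl_bound_weighted_last[OF r \<gamma> L] m(1) \<gamma>
      by simp
  next
    case False
    then have "Suc m \<le> r" "3 \<le> r"
      using that m(1) by auto
    then show ?thesis
      using energy_coef_weighted_pair[of m r \<gamma> L] cfl_bound_weighted[OF r \<open>3 \<le> r\<close> \<gamma> L m(3)] m \<gamma>
      by simp
  qed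
qed

section \<open>The stages of the scheme\<close>

definition stage_weight :: "nat \<Rightarrow> real \<Rightarrow> nat \<Rightarrow> real" where
  "stage_weight r \<gamma> m = (\<Prod>j = 1..m. gam_coef r \<gamma> j) / \<gamma>"

lemma stage_weight_0 [simp]: "stage_weight r \<gamma> 0 = 1 / \<gamma>"
  by (simp add: stage_weight_def)

lemma stage_weight_Suc: "stage_weight r \<gamma> (Suc m) = gam_coef r \<gamma> (Suc m) * stage_weight r \<gamma> m"
  by (simp add: stage_weight_def prod.nat_ivl_Suc')

lemma stage_weight_unweighted:
  assumes "r mod 4 = 0 \<or> r mod 4 = 3" "1 \<le> m"
  shows "stage_weight r \<gamma> m = 0"
proof -
  have "gam_coef r \<gamma> 1 = 0"
    using assms(1) by (simp add: gam_coef_def)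
  then show ?thesis
    using assms(2) by (auto simp: stage_weight_def intro!: prod_zero bexI[of _ 1])
qed

lemma stage_weight_weighted:
  assumes "\<not> (r mod 4 = 0 \<or> r mod 4 = 3)" "0 < \<gamma>"
  shows "stage_weight r \<gamma> m = (real m + 1) / (real m + \<gamma>)"
proof (induction m)
  case 0
  then show ?case by simp
next
  case (Suc m)
  have "(M + 2) * (M + \<gamma>) / ((M + 1) * (M + 1 + \<gamma>)) * ((M + 1) / (M + \<gamma>)) = (M + 2) / (M + 1 + \<gamma>)"
    if "0 \<le> M" for M :: real
    using that assms(2) by (simp add: divide_simps)
  from this[of "real m"] show ?case
    using Suc assms by (simp add: stage_weight_Suc gam_coef_def algebra_simps)
qed

context skew_operator
begin

lemma scheme_stages_closed_form:
  fixes Y Yt :: "nat \<Rightarrow> real \<Rightarrow> 'a"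
  assumes ab: "a \<le> b"
    and Y0: "\<forall>s\<in>{a..b}. Y 0 s = y"
    and Yt0: "Yt 0 a = y \<and> (\<forall>s\<in>{a..b}. (Yt 0 has_vector_derivative (1 / \<gamma>) *\<^sub>R D y) (at s within {a..b}))"
    and Ym: "\<forall>m. 1 \<le> m \<and> m \<le> r \<longrightarrow> Y m a = y \<and>
      (\<forall>s\<in>{a..b}. (Y m has_vector_derivative D (Y (m - 1) s)) (at s within {a..b}))"
    and Ytm: "\<forall>m. 1 \<le> m \<and> m \<le> r \<longrightarrow> Yt m a = y \<and>
      (\<forall>s\<in>{a..b}. (Yt m has_vector_derivative
         D (gam_coef r \<gamma> m *\<^sub>R Yt (m - 1) s + (1 - gam_coef r \<gamma> m) *\<^sub>R Y (m - 1) s)) (at s within {a..b}))"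
  shows "m \<le> r \<Longrightarrow> s \<in> {a..b} \<Longrightarrow>
    Y m s = taylor_exp D y m (s - a) \<and> Yt m s = taylor_exp_ext D y m (stage_weight r \<gamma> m) (s - a)"
proof (induction m arbitrary: s)
  case 0
  have "Yt 0 s = taylor_exp_ext D y 0 (1 / \<gamma>) (s - a)"
    by (rule same_vector_derivative_imp_eq[of "{a..b}" a "Yt 0"
          "\<lambda>s. taylor_exp_ext D y 0 (1 / \<gamma>) (s - a)" "\<lambda>_. (1 / \<gamma>) *\<^sub>R D y"])
      (use ab Yt0 0 has_vector_derivative_taylor_exp_ext_0 in auto)
  then show ?case
    using Y0 0 by simp
next
  case (Suc m)
  let ?g = "gam_coef r \<gamma> (Suc m)" and ?c = "stage_weight r \<gamma> m"
  have IH: "Y m s' = taylor_exp D y m (s' - a)" "Yt m s' = taylor_exp_ext D y m ?c (s' - a)"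
    if "s' \<in> {a..b}" for s'
    using Suc that by auto
  have step: "Y (Suc m) a = y \<and> (\<forall>s\<in>{a..b}. (Y (Suc m) has_vector_derivative D (Y m s)) (at s within {a..b}))"
    "Yt (Suc m) a = y \<and> (\<forall>s\<in>{a..b}. (Yt (Suc m) has_vector_derivative
        D (?g *\<^sub>R Yt m s + (1 - ?g) *\<^sub>R Y m s)) (at s within {a..b}))"
    using Ym Ytm Suc.prems(1) by auto
  have mix: "?g *\<^sub>R taylor_exp_ext D y m ?c x + (1 - ?g) *\<^sub>R taylor_exp D y m x
      = taylor_exp_ext D y m (stage_weight r \<gamma> (Suc m)) x" for x
    by (simp add: taylor_exp_ext_def stage_weight_Suc algebra_simps scaleR_diff_left)
  have "Y (Suc m) s = taylor_exp D y (Suc m) (s - a)"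
    by (rule same_vector_derivative_imp_eq[of "{a..b}" a "Y (Suc m)" "\<lambda>s. taylor_exp D y (Suc m) (s - a)"
          "\<lambda>s. D (taylor_exp D y m (s - a))"])
      (use ab step(1) IH Suc.prems(2) has_vector_derivative_taylor_exp_Suc in auto)
  moreover have "Yt (Suc m) s = taylor_exp_ext D y (Suc m) (stage_weight r \<gamma> (Suc m)) (s - a)"
    by (rule same_vector_derivative_imp_eq[of "{a..b}" a "Yt (Suc m)"
          "\<lambda>s. taylor_exp_ext D y (Suc m) (stage_weight r \<gamma> (Suc m)) (s - a)"
          "\<lambda>s. D (taylor_exp_ext D y m (stage_weight r \<gamma> (Suc m)) (s - a))"])
      (use ab step(2) IH mix Suc.prems(2) has_vector_derivative_taylor_exp_ext_Suc in auto)
  ultimately show ?case ..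
qed

lemma norm_final_stage_le:
  assumes r: "1 \<le> r" and \<gamma>: "0 < \<gamma>" "\<gamma> < 1" and x: "0 \<le> x" "x * onorm D \<le> cfl_bound r \<gamma>"
  shows "norm (taylor_exp_ext D y r (stage_weight r \<gamma> r) x) \<le> norm y"
proof -
  define L where "L = (x * onorm D)\<^sup>2"
  define A where "A m = x ^ (2 * m) * (norm ((D ^^ m) y))\<^sup>2" for m
  have L: "L \<le> (cfl_bound r \<gamma>)\<^sup>2"
    using x onorm_pos_le[OF bounded_linear_axioms] unfolding L_def
    by (auto intro!: power_mono mult_nonneg_nonneg)
  have A: "0 \<le> A m" "A (Suc m) \<le> L * A m" for m
  proof -
    show "0 \<le> A m"
      using x by (simp add: A_def)
    have "norm ((D ^^ Suc m) y) \<le> onorm D * norm ((D ^^ m) y)"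
      using onorm[OF bounded_linear_axioms] by simp
    then have "(norm ((D ^^ Suc m) y))\<^sup>2 \<le> (onorm D)\<^sup>2 * (norm ((D ^^ m) y))\<^sup>2"
      by (metis norm_ge_zero power_mono power_mult_distrib)
    then have "(x ^ (2 * m) * x\<^sup>2) * (norm ((D ^^ Suc m) y))\<^sup>2
        \<le> (x ^ (2 * m) * x\<^sup>2) * ((onorm D)\<^sup>2 * (norm ((D ^^ m) y))\<^sup>2)"
      by (rule mult_left_mono) simp
    moreover have "A (Suc m) = (x ^ (2 * m) * x\<^sup>2) * (norm ((D ^^ Suc m) y))\<^sup>2"
      by (simp add: A_def power2_eq_square mult_ac)
    moreover have "L * A m = (x ^ (2 * m) * x\<^sup>2) * ((onorm D)\<^sup>2 * (norm ((D ^^ m) y))\<^sup>2)"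
      by (simp add: A_def L_def power_mult_distrib mult_ac)
    ultimately show "A (Suc m) \<le> L * A m"
      by simp
  qed
  have "(\<Sum>m = r div 2 + 1..r + 1. energy_coef r (stage_weight r \<gamma> r) m * A m) \<le> 0"
  proof (cases "r mod 4 = 0 \<or> r mod 4 = 3")
    case True
    then show ?thesis
      using energy_sum_unweighted_nonpos[where A = A, OF True L A] stage_weight_unweighted[OF True r] by simp
  next
    case False
    then have "r mod 4 = 1 \<or> r mod 4 = 2"
      by presburger
    then show ?thesis
      using energy_sum_weighted_nonpos[where A = A, OF _ \<gamma> L A] stage_weight_weighted[OF False \<gamma>(1)] by simp
  qed
  then have "(norm (taylor_exp_ext D y r (stage_weight r \<gamma> r) x))\<^sup>2 \<le> (norm y)\<^sup>2"
    by (simp add: norm_taylor_exp_ext A_def)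
  then show ?thesis
    by (simp add: power2_le_iff_abs_le)
qed

lemma norm_scheme_step_le:
  fixes Y Yt :: "nat \<Rightarrow> real \<Rightarrow> 'a"
  assumes r: "1 \<le> r" and \<gamma>: "0 < \<gamma>" "\<gamma> < 1" and ab: "a \<le> b"
    and cfl: "(b - a) * onorm D \<le> cfl_bound r \<gamma>"
    and Y0: "\<forall>s\<in>{a..b}. Y 0 s = y"
    and Yt0: "Yt 0 a = y \<and> (\<forall>s\<in>{a..b}. (Yt 0 has_vector_derivative (1 / \<gamma>) *\<^sub>R D y) (at s within {a..b}))"
    and Ym: "\<forall>m. 1 \<le> m \<and> m \<le> r \<longrightarrow> Y m a = y \<and>
      (\<forall>s\<in>{a..b}. (Y m has_vector_derivative D (Y (m - 1) s)) (at s within {a..b}))"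
    and Ytm: "\<forall>m. 1 \<le> m \<and> m \<le> r \<longrightarrow> Yt m a = y \<and>
      (\<forall>s\<in>{a..b}. (Yt m has_vector_derivative
         D (gam_coef r \<gamma> m *\<^sub>R Yt (m - 1) s + (1 - gam_coef r \<gamma> m) *\<^sub>R Y (m - 1) s)) (at s within {a..b}))"
    and s: "s \<in> {a..b}"
  shows "norm (Yt r s) \<le> norm y"
proof -
  have "(s - a) * onorm D \<le> (b - a) * onorm D"
    using s onorm_pos_le[OF bounded_linear_axioms] by (intro mult_right_mono) auto
  then have "norm (taylor_exp_ext D y r (stage_weight r \<gamma> r) (s - a)) \<le> norm y"
    using r \<gamma> s cfl by (intro norm_final_stage_le) auto
  then show ?thesis
    using scheme_stages_closed_form[OF ab Y0 Yt0 Ym Ytm, of r s] s by simp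
qed

end

theorem theorem3p1:
  fixes D :: "real ^ 'M ^ 'M"
    and r :: nat and \<gamma> :: real and Y0 :: "real ^ 'M"
    and N :: nat and t :: "nat \<Rightarrow> real" and T :: real
    and Y :: "nat \<Rightarrow> nat \<Rightarrow> real \<Rightarrow> real ^ 'M"
    and Yt :: "nat \<Rightarrow> nat \<Rightarrow> real \<Rightarrow> real ^ 'M"
    and Yr :: "real \<Rightarrow> real ^ 'M"
  assumes skew: "D + transpose D = 0"
    and r: "r \<ge> 1"
    and gam: "0 < \<gamma>" "\<gamma> < 1"
    and N: "N \<ge> 1"
    and t0: "t 0 = 0" and tN: "t N = T"
    and tmono: "\<forall>n<N. t n < t (Suc n)"
    and CFL: "Max {t (Suc n) - t n | n. n < N} * onorm (\<lambda>x. D *v x) \<le> cfl_bound r \<gamma>"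
    and init: "Yr 0 = Y0"
    and step0: "\<forall>n<N. \<forall>s\<in>{t n..t (Suc n)}. Y n 0 s = Yr (t n)"
    and stept0: "\<forall>n<N. Yt n 0 (t n) = Yr (t n) \<and>
        (\<forall>s\<in>{t n..t (Suc n)}.
           (Yt n 0 has_vector_derivative ((1 / \<gamma>) *\<^sub>R (D *v Yr (t n)))) (at s within {t n..t (Suc n)}))"
    and stepY: "\<forall>n<N. \<forall>m. 1 \<le> m \<and> m \<le> r \<longrightarrow> Y n m (t n) = Yr (t n) \<and>
        (\<forall>s\<in>{t n..t (Suc n)}.
           (Y n m has_vector_derivative (D *v Y n (m - 1) s)) (at s within {t n..t (Suc n)}))"
    and stepYt: "\<forall>n<N. \<forall>m. 1 \<le> m \<and> m \<le> r \<longrightarrow> Yt n m (t n) = Yr (t n) \<and>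
        (\<forall>s\<in>{t n..t (Suc n)}.
           (Yt n m has_vector_derivative
              (D *v (gam_coef r \<gamma> m *\<^sub>R Yt n (m - 1) s + (1 - gam_coef r \<gamma> m) *\<^sub>R Y n (m - 1) s)))
             (at s within {t n..t (Suc n)}))"
    and out: "\<forall>n<N. \<forall>s\<in>{t n..t (Suc n)}. Yr s = Yt n r s"
  shows "\<forall>s\<in>{0..T}. norm (Yr s) \<le> norm Y0"
proof -
  interpret skew_operator "(*v) D"
    using skew by (rule skew_operator_matrix)
  have step: "norm (Yr s) \<le> norm (Yr (t n))" if n: "n < N" and s: "s \<in> {t n..t (Suc n)}" for n s
  proof -
    have "t (Suc n) - t n \<le> Max {t (Suc n) - t n | n. n < N}"
      using n by (intro Max_ge) auto
    then have "(t (Suc n) - t n) * onorm (\<lambda>x. D *v x) \<le> cfl_bound r \<gamma>"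
      using CFL onorm_pos_le[OF bounded_linear_axioms] by (meson mult_right_mono order_trans)
    then have "norm (Yt n r s) \<le> norm (Yr (t n))"
      using n s r gam tmono step0 stept0 stepY stepYt by (intro norm_scheme_step_le[where Y = "Y n"]) auto
    then show ?thesis
      using out n s by simp
  qed
  have "\<forall>n<N. t n \<le> t (Suc n)"
    using tmono by (simp add: less_imp_le)
  then have "\<forall>s\<in>{t 0..t N}. norm (Yr s) \<le> norm (Yr (t 0))"
    using step by (rule bounded_by_start_on_partition)
  then show ?thesis
    using t0 tN init by simp
qed

end
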